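(* Let $1\le p<\infty$. For each $k\ge1$ define the sequence $b^{(k)}=(b^{(k)}_n)_{n\ge1}$ by $b^{(k)}_n=1/k$ if $n\le k$ and $b^{(k)}_n=0$ if $n>k$. Then $(b^{(k)})_{k\ge1}$ is a Schauder basis of $h_p$ (with norm $\|x\|_{h_p}=(\sum_{k\ge1}|k\Delta x_k|^p)^{1/p}$). Moreover, every $x\in h_p$ has a unique representation $$x=\sum_k\lambda_k b^{(k)},\qquad\text{where } \lambda_k=(Mx)_k=k(x_k-x_{k+1}) \text{ for all } k.$$
   Context: Sequences are complex sequences $x=(x_k)_{k\ge1}$, and $\Delta x_k=x_k-x_{k+1}$. For $1\le p<\infty$, $$h_p=\Big\{x:\ \sum_{k=1}^{\infty}(k|\Delta x_k|)^p<\infty,\ \lim_k x_k=0\Big\}.$$ For $p=1$ this is the Hahn space $h$. $M$ is the matrix with $(Mx)_k=k(x_k-x_{k+1})$. A Schauder basis $(b^{(k)})$ of a normed sequence space $\lambda$ is a sequence such that every $x\in\lambda$ has a unique scalar sequence $(\alpha_k)$ with $\|x-\sum_{k\le n}\alpha_kb^{(k)}\|\to0$ as $n\to\infty$. *)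

theory Defs
  imports "HOL-Analysis.Analysis"
begin

text \<open>Sequences x = (x_k)_{k>=1} are modelled as functions nat => complex whose
  value at index 0 is unused and normalised to 0.\<close>

definition Delta :: "(nat \<Rightarrow> complex) \<Rightarrow> nat \<Rightarrow> complex" where
  "Delta x k = x k - x (Suc k)"

definition Mop :: "(nat \<Rightarrow> complex) \<Rightarrow> nat \<Rightarrow> complex" where
  "Mop x k = of_nat k * (x k - x (Suc k))"

definition hp :: "real \<Rightarrow> (nat \<Rightarrow> complex) set" where
  "hp p = {x. x 0 = 0 \<and>
              summable (\<lambda>k. (real k * cmod (Delta x k)) powr p) \<and>
              x \<longlonglongrightarrow> 0}"

definition hp_norm :: "real \<Rightarrow> (nat \<Rightarrow> complex) \<Rightarrow> real" where
  "hp_norm p x = (\<Sum>k. (real k * cmod (Delta x k)) powr p) powr (1 / p)"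

definition bseq :: "nat \<Rightarrow> nat \<Rightarrow> complex" where
  "bseq k n = (if 1 \<le> n \<and> n \<le> k then 1 / of_nat k else 0)"

definition partial_exp :: "(nat \<Rightarrow> complex) \<Rightarrow> (nat \<Rightarrow> nat \<Rightarrow> complex) \<Rightarrow> nat \<Rightarrow> nat \<Rightarrow> complex" where
  "partial_exp \<alpha> b n = (\<lambda>j. \<Sum>k=1..n. \<alpha> k * b k j)"

definition has_expansion ::
  "((nat \<Rightarrow> complex) \<Rightarrow> real) \<Rightarrow> (nat \<Rightarrow> nat \<Rightarrow> complex) \<Rightarrow> (nat \<Rightarrow> complex) \<Rightarrow> (nat \<Rightarrow> complex) \<Rightarrow> bool" where
  "has_expansion nrm b x \<alpha> \<longleftrightarrow> (\<lambda>n. nrm (x - partial_exp \<alpha> b n)) \<longlonglongrightarrow> 0"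

definition schauder_basis ::
  "(nat \<Rightarrow> complex) set \<Rightarrow> ((nat \<Rightarrow> complex) \<Rightarrow> real) \<Rightarrow> (nat \<Rightarrow> nat \<Rightarrow> complex) \<Rightarrow> bool" where
  "schauder_basis S nrm b \<longleftrightarrow> (\<forall>k\<ge>1. b k \<in> S) \<and>
     (\<forall>x\<in>S. \<exists>!\<alpha>. \<alpha> 0 = 0 \<and> has_expansion nrm b x \<alpha>)"

end

theory Submission
  imports Defs
begin

text \<open>The partial sums \<open>S\<^sub>n = \<Sum>k\<le>n. \<alpha>\<^sub>k b\<^sup>(\<^sup>k\<^sup>)\<close> satisfy \<open>j \<Delta>(S\<^sub>n)\<^sub>j = \<alpha>\<^sub>j\<close> for \<open>j \<le> n\<close>
  and \<open>\<Delta>(S\<^sub>n)\<^sub>j = 0\<close> for \<open>j > n\<close>. Hence the \<open>h\<^sub>p\<close>-norm of \<open>x - S\<^sub>n\<close> is computed from the terms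
  \<open>|(Mx)\<^sub>j - \<alpha>\<^sub>j|\<close> for \<open>j \<le> n\<close> and the tail \<open>j|\<Delta>x\<^sub>j|\<close> for \<open>j > n\<close>. With \<open>\<alpha> = Mx\<close> only the tail of a
  convergent series remains, which tends to zero; conversely every single term \<open>|(Mx)\<^sub>k - \<alpha>\<^sub>k|\<close>
  is bounded by the norm, so convergence of the expansion forces \<open>\<alpha>\<^sub>k = (Mx)\<^sub>k\<close>.\<close>

lemma partial_exp_bseq:
  assumes "1 \<le> j"
  shows "partial_exp \<alpha> bseq n j = (\<Sum>k=j..n. \<alpha> k / of_nat k)"
proof -
  have "partial_exp \<alpha> bseq n j = (\<Sum>k\<in>{1..n}. if j \<le> k then \<alpha> k / of_nat k else 0)"
    unfolding partial_exp_def bseq_def using assms by (intro sum.cong) auto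
  also have "\<dots> = (\<Sum>k\<in>{k\<in>{1..n}. j \<le> k}. \<alpha> k / of_nat k)"
    by (rule sum.inter_filter[symmetric]) simp
  also have "{k\<in>{1..n}. j \<le> k} = {j..n}"
    using assms by auto
  finally show ?thesis .
qed

lemma Delta_partial_exp_bseq:
  assumes "1 \<le> j"
  shows "Delta (partial_exp \<alpha> bseq n) j = (if j \<le> n then \<alpha> j / of_nat j else 0)"
proof -
  have "partial_exp \<alpha> bseq n j = partial_exp \<alpha> bseq n (Suc j) + (if j \<le> n then \<alpha> j / of_nat j else 0)"
    using assms by (simp add: partial_exp_bseq sum.atLeast_Suc_atMost)
  then show ?thesis
    by (simp add: Delta_def)
qed

lemma weighted_Delta_diff_partial_exp_bseq:
  "real j * cmod (Delta (x - partial_exp \<alpha> bseq n) j) =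
     (if 1 \<le> j \<and> j \<le> n then cmod (Mop x j - \<alpha> j) else real j * cmod (Delta x j))"
proof (cases "j = 0")
  case False
  have "Mop x j = of_nat j * Delta x j"
    by (simp add: Mop_def Delta_def)
  with False have scaled_Delta: "of_nat j * (Delta x j - Delta (partial_exp \<alpha> bseq n) j) =
      (if j \<le> n then Mop x j - \<alpha> j else of_nat j * Delta x j)"
    by (simp add: Delta_partial_exp_bseq field_simps)
  have "Delta (x - partial_exp \<alpha> bseq n) j = Delta x j - Delta (partial_exp \<alpha> bseq n) j"
    by (simp add: Delta_def)
  then have "real j * cmod (Delta (x - partial_exp \<alpha> bseq n) j) =
      cmod (of_nat j * (Delta x j - Delta (partial_exp \<alpha> bseq n) j))"
    by (simp add: norm_mult)
  also have "\<dots> = cmod (if j \<le> n then Mop x j - \<alpha> j else of_nat j * Delta x j)"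
    using scaled_Delta by simp
  finally show ?thesis
    using False by (simp add: norm_mult)
qed simp

lemma summable_weighted_Delta_diff_partial_exp_bseq:
  assumes "summable (\<lambda>j. (real j * cmod (Delta x j)) powr p)"
  shows "summable (\<lambda>j. (real j * cmod (Delta (x - partial_exp \<alpha> bseq n) j)) powr p)"
proof -
  have "eventually (\<lambda>j. (real j * cmod (Delta (x - partial_exp \<alpha> bseq n) j)) powr p =
      (real j * cmod (Delta x j)) powr p) sequentially"
    using eventually_gt_at_top[of n]
    by eventually_elim (simp add: weighted_Delta_diff_partial_exp_bseq)
  then show ?thesis
    using summable_cong assms by fastforce
qed

lemma weighted_Delta_le_hp_norm:
  assumes "0 < p" and "summable (\<lambda>j. (real j * cmod (Delta x j)) powr p)"
  shows "real k * cmod (Delta x k) \<le> hp_norm p x"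
proof -
  have "(real k * cmod (Delta x k)) powr p \<le> (\<Sum>j. (real j * cmod (Delta x j)) powr p)"
    using sum_le_suminf[OF assms(2), of "{k}"] by simp
  then have "((real k * cmod (Delta x k)) powr p) powr (1 / p) \<le> hp_norm p x"
    unfolding hp_norm_def using assms(1) by (intro powr_mono2) auto
  then show ?thesis
    using assms(1) by (simp add: powr_powr)
qed

lemma bseq_in_hp:
  assumes "1 \<le> k"
  shows "bseq k \<in> hp p"
proof -
  have "eventually (\<lambda>n. bseq k n = 0) sequentially"
    using eventually_gt_at_top[of k] by eventually_elim (simp add: bseq_def)
  then have "bseq k \<longlonglongrightarrow> 0"
    by (rule tendsto_eventually)
  moreover have "eventually (\<lambda>j. (real j * cmod (Delta (bseq k) j)) powr p = 0) sequentially"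
    using eventually_gt_at_top[of k] by eventually_elim (simp add: bseq_def Delta_def)
  then have "summable (\<lambda>j. (real j * cmod (Delta (bseq k) j)) powr p)"
    using summable_cong[of _ "\<lambda>_. 0::real"] by simp
  ultimately show ?thesis
    by (simp add: hp_def bseq_def)
qed

lemma has_expansion_Mop:
  assumes p: "0 < p" and x: "x \<in> hp p"
  shows "has_expansion (hp_norm p) bseq x (Mop x)"
proof -
  define f where "f = (\<lambda>j. (real j * cmod (Delta x j)) powr p)"
  have "summable f"
    using x by (simp add: hp_def f_def)
  have remainder: "hp_norm p (x - partial_exp (Mop x) bseq n) = (\<Sum>i. f (i + Suc n)) powr (1 / p)"
    for n
  proof -
    define g where "g = (\<lambda>j. (real j * cmod (Delta (x - partial_exp (Mop x) bseq n) j)) powr p)"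
    have "summable g"
      unfolding g_def f_def
      by (rule summable_weighted_Delta_diff_partial_exp_bseq) (use \<open>summable f\<close> in \<open>simp add: f_def\<close>)
    have "(\<Sum>i<Suc n. g i) = 0"
      by (intro sum.neutral) (auto simp: g_def weighted_Delta_diff_partial_exp_bseq Mop_def)
    moreover have "g (i + Suc n) = f (i + Suc n)" for i
      by (simp add: g_def f_def weighted_Delta_diff_partial_exp_bseq)
    ultimately have "suminf g = (\<Sum>i. f (i + Suc n))"
      using suminf_split_initial_segment[OF \<open>summable g\<close>, of "Suc n"] by simp
    then show ?thesis
      by (simp add: hp_norm_def g_def)
  qed
  have "(\<lambda>n. \<Sum>i. f (i + Suc n)) \<longlonglongrightarrow> 0"
    using LIMSEQ_Suc[OF suminf_exist_split2[OF \<open>summable f\<close>]] by simp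
  moreover have "0 \<le> (\<Sum>i. f (i + Suc n))" for n
  proof (rule suminf_nonneg)
    show "summable (\<lambda>i. f (i + Suc n))"
      using \<open>summable f\<close> by (rule summable_ignore_initial_segment)
  qed (simp add: f_def)
  ultimately have "(\<lambda>n. (\<Sum>i. f (i + Suc n)) powr (1 / p)) \<longlonglongrightarrow> 0"
    using p by (intro tendsto_zero_powrI[OF _ tendsto_const]) auto
  then show ?thesis
    unfolding has_expansion_def remainder .
qed

lemma has_expansion_imp_Mop:
  assumes p: "0 < p" and x: "x \<in> hp p" and \<alpha>: "has_expansion (hp_norm p) bseq x \<alpha>"
    and k: "1 \<le> k"
  shows "\<alpha> k = Mop x k"
proof -
  have summable: "summable (\<lambda>j. (real j * cmod (Delta x j)) powr p)"
    using x by (simp add: hp_def)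
  have "cmod (Mop x k - \<alpha> k) \<le> hp_norm p (x - partial_exp \<alpha> bseq n)" if "k \<le> n" for n
    using weighted_Delta_le_hp_norm[OF p summable_weighted_Delta_diff_partial_exp_bseq[OF summable]]
    using k that by (metis weighted_Delta_diff_partial_exp_bseq)
  then have "cmod (Mop x k - \<alpha> k) \<le> 0"
    using \<alpha> unfolding has_expansion_def by (intro LIMSEQ_le_const) auto
  then show ?thesis
    by simp
qed

lemma eq_Mop_iff: "\<alpha> = Mop x \<longleftrightarrow> \<alpha> 0 = 0 \<and> (\<forall>k\<ge>1. \<alpha> k = Mop x k)"
proof
  assume "\<alpha> 0 = 0 \<and> (\<forall>k\<ge>1. \<alpha> k = Mop x k)"
  then show "\<alpha> = Mop x"
    by (intro ext) (metis Mop_def less_one mult_eq_0_iff not_le of_nat_0)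
qed (simp add: Mop_def)

lemma has_expansion_bseq_iff:
  assumes "0 < p" and "x \<in> hp p"
  shows "(\<alpha> 0 = 0 \<and> has_expansion (hp_norm p) bseq x \<alpha>) \<longleftrightarrow> \<alpha> = Mop x"
proof
  assume "\<alpha> 0 = 0 \<and> has_expansion (hp_norm p) bseq x \<alpha>"
  then show "\<alpha> = Mop x"
    using has_expansion_imp_Mop[OF assms] eq_Mop_iff by blast
qed (use has_expansion_Mop[OF assms] in \<open>simp add: Mop_def\<close>)

theorem theorem2p5:
  fixes p :: real
  assumes "1 \<le> p"
  shows "schauder_basis (hp p) (hp_norm p) bseq \<and>
         (\<forall>x\<in>hp p. \<forall>\<alpha>. (\<alpha> 0 = 0 \<and> has_expansion (hp_norm p) bseq x \<alpha>) \<longleftrightarrow>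
                         (\<alpha> 0 = 0 \<and> (\<forall>k\<ge>1. \<alpha> k = Mop x k)))"
proof -
  have p: "0 < p"
    using assms by simp
  have "\<exists>!\<alpha>. \<alpha> 0 = 0 \<and> has_expansion (hp_norm p) bseq x \<alpha>" if "x \<in> hp p" for x
    using has_expansion_bseq_iff[OF p that] by simp
  then show ?thesis
    unfolding schauder_basis_def
    using bseq_in_hp has_expansion_bseq_iff[OF p] eq_Mop_iff by simp
qed

end
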